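(* Consider the four-oscillator system below with $\alpha_\mathrm{s}=\alpha_\mathrm{n}=\frac{\pi}{2}$ or $\alpha_\mathrm{s}=\alpha_\mathrm{n}=-\frac{\pi}{2}$, and arbitrary $A\in\mathbb{R}$, $\omega\in\mathbb{R}$. Then $$H(\psi_1,\psi_3)=\sin\!\left(\frac{\psi_1}{2}\right)\sin\!\left(\frac{\psi_3}{2}\right)$$ (with $\psi_1,\psi_3$ the real-valued phase differences of a solution) is constant along every solution.
   Context: Network of $M=2$ populations of $N=2$ phase oscillators with phases $\theta_{\sigma,k}(t)\in\mathbb{R}$ (population $\sigma\in\{1,2\}$, oscillator $k\in\{1,2\}$), evolving by $$\dot\theta_{\sigma,k}=\omega+\frac{K_\mathrm{s}}{4}\sum_{j=1}^{2}\sin(\theta_{\sigma,j}-\theta_{\sigma,k}-\alpha_\mathrm{s})+\frac{K_\mathrm{n}}{4}\sum_{j=1}^{2}\sin(\theta_{\tau,j}-\theta_{\sigma,k}-\alpha_\mathrm{n}),$$ where $\tau$ denotes the population other than $\sigma$, $\omega\in\mathbb{R}$, $\alpha_\mathrm{s},\alpha_\mathrm{n}\in\mathbb{R}$ are phase lags, and the coupling strengths are parametrized by $A\in\mathbb{R}$ via $K_\mathrm{s}=(1+A)/2$, $K_\mathrm{n}=(1-A)/2$ (so $K_\mathrm{s}+K_\mathrm{n}=1$, $A=K_\mathrm{s}-K_\mathrm{n}$). The phase differences are $\psi_1=\theta_{1,1}-\theta_{1,2}$, $\psi_2=\theta_{1,2}-\theta_{2,1}$, $\psi_3=\theta_{2,1}-\theta_{2,2}$;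 they satisfy an autonomous ODE (the reduced system) since the right-hand side depends only on phase differences. *)

theory Defs
  imports "HOL-Analysis.Analysis"
begin

text \<open>Phases: th \<sigma> k t with population \<sigma> \<in> {1,2} and oscillator k \<in> {1,2};
  the other population of \<sigma> is 3 - \<sigma>.\<close>

definition Ks :: "real \<Rightarrow> real" where "Ks A = (1 + A) / 2"
definition Kn :: "real \<Rightarrow> real" where "Kn A = (1 - A) / 2"

definition rhs :: "real \<Rightarrow> real \<Rightarrow> real \<Rightarrow> real \<Rightarrow> (nat \<Rightarrow> nat \<Rightarrow> real) \<Rightarrow> nat \<Rightarrow> nat \<Rightarrow> real" where
  "rhs \<omega> A as an x \<sigma> k =
     \<omega> + Ks A / 4 * (\<Sum>j\<in>{1,2}. sin (x \<sigma> j - x \<sigma> k - as))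
       + Kn A / 4 * (\<Sum>j\<in>{1,2}. sin (x (3 - \<sigma>) j - x \<sigma> k - an))"

definition is_solution :: "real \<Rightarrow> real \<Rightarrow> real \<Rightarrow> real \<Rightarrow> real set \<Rightarrow> (nat \<Rightarrow> nat \<Rightarrow> real \<Rightarrow> real) \<Rightarrow> bool" where
  "is_solution \<omega> A as an I th \<longleftrightarrow>
     (\<forall>\<sigma>\<in>{1,2}. \<forall>k\<in>{1,2}. \<forall>t\<in>I.
        ((\<lambda>s. th \<sigma> k s) has_real_derivative rhs \<omega> A as an (\<lambda>a b. th a b t) \<sigma> k) (at t within I))"

definition psi1 :: "(nat \<Rightarrow> nat \<Rightarrow> real \<Rightarrow> real) \<Rightarrow> real \<Rightarrow> real" where
  "psi1 th t = th 1 1 t - th 1 2 t"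
definition psi2 :: "(nat \<Rightarrow> nat \<Rightarrow> real \<Rightarrow> real) \<Rightarrow> real \<Rightarrow> real" where
  "psi2 th t = th 1 2 t - th 2 1 t"
definition psi3 :: "(nat \<Rightarrow> nat \<Rightarrow> real \<Rightarrow> real) \<Rightarrow> real \<Rightarrow> real" where
  "psi3 th t = th 2 1 t - th 2 2 t"

definition H :: "real \<Rightarrow> real \<Rightarrow> real" where
  "H p1 p3 = sin (p1 / 2) * sin (p3 / 2)"

end

theory Submission
  imports Defs
begin

text \<open>For phase lags \<open>\<alpha> = \<plusminus>\<pi>/2\<close> every coupling term \<open>sin (\<phi> - \<alpha>)\<close> becomes
  \<open>-sin \<alpha> cos \<phi>\<close>, an even function of the phase difference. The coupling within a
  population then cancels in \<open>\<dot>\<psi>\<^sub>1\<close> and \<open>\<dot>\<psi>\<^sub>3\<close>, and what remains of the coupling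
  between populations is exactly orthogonal to the gradient of
  \<open>H = sin (\<psi>\<^sub>1/2) sin (\<psi>\<^sub>3/2)\<close>; a function with vanishing derivative on an
  interval is constant.\<close>

lemma cos_eq_0_if_half_pi:
  assumes "\<alpha> = pi / 2 \<or> \<alpha> = - pi / 2"
  shows "cos \<alpha> = 0"
  using assms by (metis cos_minus cos_pi_half minus_divide_left)

lemma sin_diff_cos_eq_0:
  fixes x \<alpha> :: real
  assumes "cos \<alpha> = 0"
  shows "sin (x - \<alpha>) = - sin \<alpha> * cos x"
  unfolding sin_diff using assms by simp

lemma rhs_diff_same_population:
  assumes "cos as = 0" and "cos an = 0"
  shows "rhs \<omega> A as an x \<sigma> 1 - rhs \<omega> A as an x \<sigma> 2
       = - sin an * Kn A / 4 *
         (cos (x (3 - \<sigma>) 1 - x \<sigma> 1) + cos (x (3 - \<sigma>) 2 - x \<sigma> 1)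
          - cos (x (3 - \<sigma>) 1 - x \<sigma> 2) - cos (x (3 - \<sigma>) 2 - x \<sigma> 2))"
proof -
  have cos_sym: "cos (u - v) = cos (v - u)" for u v :: real
    by (metis cos_minus minus_diff_eq)
  show ?thesis
    unfolding rhs_def sin_diff_cos_eq_0[OF assms(1)] sin_diff_cos_eq_0[OF assms(2)]
    by (simp add: cos_sym algebra_simps)
qed

lemma psi1_has_derivative:
  assumes "is_solution \<omega> A as an I th" and "t \<in> I"
  shows "(psi1 th has_real_derivative
      rhs \<omega> A as an (\<lambda>a b. th a b t) 1 1 - rhs \<omega> A as an (\<lambda>a b. th a b t) 1 2) (at t within I)"
  using assms unfolding is_solution_def psi1_def
  by (intro DERIV_diff) auto

lemma psi3_has_derivative:
  assumes "is_solution \<omega> A as an I th" and "t \<in> I"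
  shows "(psi3 th has_real_derivative
      rhs \<omega> A as an (\<lambda>a b. th a b t) 2 1 - rhs \<omega> A as an (\<lambda>a b. th a b t) 2 2) (at t within I)"
  using assms unfolding is_solution_def psi3_def
  by (intro DERIV_diff) auto

lemma H_has_derivative:
  assumes "(f has_real_derivative f') (at t within S)"
    and "(g has_real_derivative g') (at t within S)"
  shows "((\<lambda>t. H (f t) (g t)) has_real_derivative
      (cos (f t / 2) * sin (g t / 2) * f' + sin (f t / 2) * cos (g t / 2) * g') / 2) (at t within S)"
  unfolding H_def
  by (auto intro!: derivative_eq_intros assms simp: algebra_simps)

lemma sin_half_product_coupling_cancel:
  fixes a b c d :: real
  shows "cos ((a - b) / 2) * sin ((c - d) / 2) * (cos (c - a) + cos (d - a) - cos (c - b) - cos (d - b))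
       + sin ((a - b) / 2) * cos ((c - d) / 2) * (cos (a - c) + cos (b - c) - cos (a - d) - cos (b - d)) = 0"
proof -
  have double_diff: "x - y = 2 * (x / 2 - y / 2)" for x y :: real
    by simp
  have half_diff: "(x - y) / 2 = x / 2 - y / 2" for x y :: real
    by simp
  show ?thesis
    unfolding double_diff[of c a] double_diff[of d a] double_diff[of c b] double_diff[of d b]
      double_diff[of a c] double_diff[of b c] double_diff[of a d] double_diff[of b d]
      half_diff cos_double sin_diff cos_diff
    using sin_cos_squared_add[of "a / 2"] sin_cos_squared_add[of "b / 2"]
      sin_cos_squared_add[of "c / 2"] sin_cos_squared_add[of "d / 2"]
    by algebra
qed

lemma H_psi_has_derivative_zero:
  assumes "cos \<alpha> = 0" and "is_solution \<omega> A \<alpha> \<alpha> I th" and "t \<in> I"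
  shows "((\<lambda>t. H (psi1 th t) (psi3 th t)) has_real_derivative 0) (at t within I)"
proof -
  let ?R = "rhs \<omega> A \<alpha> \<alpha> (\<lambda>a b. th a b t)"
  let ?a = "th 1 1 t" and ?b = "th 1 2 t" and ?c = "th 2 1 t" and ?d = "th 2 2 t"
  have psi1_rate: "?R 1 1 - ?R 1 2
      = - sin \<alpha> * Kn A / 4 * (cos (?c - ?a) + cos (?d - ?a) - cos (?c - ?b) - cos (?d - ?b))"
    using rhs_diff_same_population[OF assms(1,1), of \<omega> A "\<lambda>a b. th a b t" 1] by simp
  have psi3_rate: "?R 2 1 - ?R 2 2
      = - sin \<alpha> * Kn A / 4 * (cos (?a - ?c) + cos (?b - ?c) - cos (?a - ?d) - cos (?b - ?d))"
    using rhs_diff_same_population[OF assms(1,1), of \<omega> A "\<lambda>a b. th a b t" 2] by simp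
  have "((\<lambda>t. H (psi1 th t) (psi3 th t)) has_real_derivative
      (cos ((?a - ?b) / 2) * sin ((?c - ?d) / 2) * (?R 1 1 - ?R 1 2)
       + sin ((?a - ?b) / 2) * cos ((?c - ?d) / 2) * (?R 2 1 - ?R 2 2)) / 2) (at t within I)"
    using H_has_derivative[OF psi1_has_derivative[OF assms(2,3)] psi3_has_derivative[OF assms(2,3)]]
    by (simp add: psi1_def psi3_def)
  also have "(cos ((?a - ?b) / 2) * sin ((?c - ?d) / 2) * (?R 1 1 - ?R 1 2)
       + sin ((?a - ?b) / 2) * cos ((?c - ?d) / 2) * (?R 2 1 - ?R 2 2)) / 2
      = - sin \<alpha> * Kn A / 8 *
        (cos ((?a - ?b) / 2) * sin ((?c - ?d) / 2)
           * (cos (?c - ?a) + cos (?d - ?a) - cos (?c - ?b) - cos (?d - ?b))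
         + sin ((?a - ?b) / 2) * cos ((?c - ?d) / 2)
           * (cos (?a - ?c) + cos (?b - ?c) - cos (?a - ?d) - cos (?b - ?d)))"
    unfolding psi1_rate psi3_rate by (simp add: field_simps)
  also have "\<dots> = 0"
    by (simp only: sin_half_product_coupling_cancel mult_zero_right)
  finally show ?thesis .
qed

theorem mainTheorem4:
  fixes \<omega> A \<alpha> :: real and I :: "real set" and th :: "nat \<Rightarrow> nat \<Rightarrow> real \<Rightarrow> real"
  assumes "\<alpha> = pi / 2 \<or> \<alpha> = - pi / 2"
    and "is_interval I"
    and "is_solution \<omega> A \<alpha> \<alpha> I th"
    and "t1 \<in> I" and "t2 \<in> I"
  shows "H (psi1 th t1) (psi3 th t1) = H (psi1 th t2) (psi3 th t2)"
proof -
  have "\<forall>t\<in>I. ((\<lambda>t. H (psi1 th t) (psi3 th t)) has_real_derivative 0) (at t within I)"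
    using H_psi_has_derivative_zero[OF cos_eq_0_if_half_pi[OF assms(1)] assms(3)] by blast
  moreover have "convex I"
    using assms(2) by (simp add: is_interval_convex)
  ultimately obtain C where "\<forall>t\<in>I. H (psi1 th t) (psi3 th t) = C"
    using has_field_derivative_zero_constant by blast
  then show ?thesis
    using assms(4,5) by simp
qed

end
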